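(* Let $A=(A_1,A_2)\in\mathbb{N}^2$ with $\gcd(A_1,A_2)=1$, let $s\ge 2$, and let $$\varphi(x,y)=\sum_{i=1}^s a_i x^{\alpha_i}y^{\beta_i},$$ where $a_i\neq 0$, $\alpha_i,\beta_i\in\mathbb{N}\cup\{0\}$, $A_1\alpha_i+A_2\beta_i=B$ for all $i$ with a common $B\in\mathbb{N}$, and $\alpha_1>\dots>\alpha_s\ge 0$. Put $g(u)=\sum_{i=1}^s a_i u^{(\alpha_1-\alpha_i)/A_2}$. Assume $a_1>0$, $a_s>0$ and $\alpha_1,\beta_1,\alpha_s,\beta_s$ are even nonnegative integers. Then $\varphi$ is nondegenerate in the weak sense (i.e. $\varphi(x,y)\neq 0$ whenever $x\neq 0$ and $y\neq 0$) if and only if $g(u)>0$ for all $u\in\mathbb{R}$, i.e. if and only if $g$ has no real roots.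
   Context: $\mathbb{N}=\{1,2,\dots\}$. The exponents $(\alpha_1-\alpha_i)/A_2$ are nonnegative integers; $g$ is the characteristic polynomial of $\varphi$, and $\varphi(x,y)=x^{\alpha_1}y^{\beta_1}g(x^{-A_2}y^{A_1})$ for $x\neq0$. *)

theory Defs
  imports Complex_Main
begin

definition qh_poly :: "nat \<Rightarrow> (nat \<Rightarrow> real) \<Rightarrow> (nat \<Rightarrow> nat) \<Rightarrow> (nat \<Rightarrow> nat) \<Rightarrow> real \<Rightarrow> real \<Rightarrow> real" where
  "qh_poly s a \<alpha> \<beta> x y = (\<Sum>i=1..s. a i * x ^ (\<alpha> i) * y ^ (\<beta> i))"

text \<open>Characteristic polynomial g(u) = sum_{i=1..s} a_i u^((alpha_1 - alpha_i)/A_2);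
  the exponents are exact nonnegative integers under the hypotheses.\<close>
definition char_poly :: "nat \<Rightarrow> nat \<Rightarrow> (nat \<Rightarrow> real) \<Rightarrow> (nat \<Rightarrow> nat) \<Rightarrow> real \<Rightarrow> real" where
  "char_poly A2 s a \<alpha> u = (\<Sum>i=1..s. a i * u ^ ((\<alpha> 1 - \<alpha> i) div A2))"

definition weakly_nondegenerate :: "(real \<Rightarrow> real \<Rightarrow> real) \<Rightarrow> bool" where
  "weakly_nondegenerate \<phi> \<longleftrightarrow> (\<forall>x y. x \<noteq> 0 \<longrightarrow> y \<noteq> 0 \<longrightarrow> \<phi> x y \<noteq> 0)"

end

theory Submission
  imports Defs
begin

text \<open>For x, y \<noteq> 0 the weight relation A1 alpha_i + A2 beta_i = B factors phi(x,y) as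
  x^alpha_1 y^beta_1 g(y^A1 / x^A2), and since gcd(A1, A2) = 1 the quotient y^A1 / x^A2 takes
  every nonzero real value; as g(0) = a_1 \<noteq> 0, phi is weakly nondegenerate iff g has no real
  root. A continuous g without roots keeps the sign of g(0) = a_1 > 0, so "no real root" and
  "g > 0" coincide.\<close>

lemma weighted_exponent_shift:
  fixes A1 A2 a b a' b' :: nat
  assumes "A2 > 0" and "coprime A1 A2"
    and "A1 * a' + A2 * b' = A1 * a + A2 * b" and "a' \<le> a"
  shows "a = a' + A2 * ((a - a') div A2) \<and> b' = b + A1 * ((a - a') div A2)"
proof -
  define d where "d = a - a'"
  have a: "a = a' + d" using assms(4) d_def by simp
  have weights: "A2 * b' = A1 * d + A2 * b" using assms(3) a by (simp add: algebra_simps)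
  then have "A2 dvd A1 * d"
    by (metis dvd_add_left_iff dvd_triv_left)
  then have "A2 dvd d" using assms(2)
    by (metis coprime_commute coprime_dvd_mult_right_iff)
  then obtain k where k: "d = A2 * k" by blast
  have "A2 * b' = A2 * (b + A1 * k)" using weights k by (simp add: algebra_simps)
  then have "b' = b + A1 * k" using assms(1) by simp
  then show ?thesis using a k assms(1) d_def by simp
qed

lemma qh_poly_eq_char_poly:
  fixes x y :: real
  assumes "A2 > 0"
    and shift: "\<And>i. i \<in> {1..s} \<Longrightarrow> \<alpha> 1 = \<alpha> i + A2 * k i \<and> \<beta> i = \<beta> 1 + A1 * k i"
    and "x \<noteq> 0" and "y \<noteq> 0"
  shows "qh_poly s a \<alpha> \<beta> x y = x ^ \<alpha> 1 * y ^ \<beta> 1 * char_poly A2 s a \<alpha> (y ^ A1 / x ^ A2)"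
proof -
  have "a i * x ^ \<alpha> i * y ^ \<beta> i
          = x ^ \<alpha> 1 * y ^ \<beta> 1 * (a i * (y ^ A1 / x ^ A2) ^ ((\<alpha> 1 - \<alpha> i) div A2))"
    if i: "i \<in> {1..s}" for i
  proof -
    have k: "(\<alpha> 1 - \<alpha> i) div A2 = k i" using shift[OF i] assms(1) by simp
    have "x ^ \<alpha> 1 = x ^ \<alpha> i * (x ^ A2) ^ k i" "y ^ \<beta> i = y ^ \<beta> 1 * (y ^ A1) ^ k i"
      using shift[OF i] by (metis power_add power_mult)+
    then show ?thesis
      unfolding k using assms(3,4) by (simp add: power_divide field_simps)
  qed
  then show ?thesis
    unfolding qh_poly_def char_poly_def sum_distrib_left by (intro sum.cong) auto
qed

lemma char_poly_at_0:
  assumes "s \<ge> 1"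
    and shift: "\<And>i. i \<in> {1..s} \<Longrightarrow> \<alpha> 1 = \<alpha> i + A2 * k i"
    and decreasing: "\<And>i. i \<in> {2..s} \<Longrightarrow> \<alpha> i < \<alpha> 1"
  shows "char_poly A2 s a \<alpha> 0 = a 1"
proof -
  have "a i * 0 ^ ((\<alpha> 1 - \<alpha> i) div A2) = 0" if i: "i \<in> {2..s}" for i
  proof -
    have "\<alpha> 1 - \<alpha> i = A2 * k i" "\<alpha> 1 - \<alpha> i > 0"
      using shift[of i] decreasing[OF i] i by auto
    then have "(\<alpha> 1 - \<alpha> i) div A2 > 0" by auto
    then show ?thesis by simp
  qed
  then have "(\<Sum>i=2..s. a i * 0 ^ ((\<alpha> 1 - \<alpha> i) div A2)) = (0::real)"
    by (intro sum.neutral) blast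
  moreover have "char_poly A2 s a \<alpha> 0 = a 1 + (\<Sum>i=2..s. a i * 0 ^ ((\<alpha> 1 - \<alpha> i) div A2))"
    unfolding char_poly_def using assms(1) by (simp add: sum.atLeast_Suc_atMost numeral_2_eq_2)
  ultimately show ?thesis by simp
qed

lemma power_quotient_surj:
  fixes u :: real
  assumes "A1 > 0" and "coprime A1 A2" and "u \<noteq> 0"
  obtains x y where "x \<noteq> 0" "y \<noteq> 0" "y ^ A1 / x ^ A2 = u"
proof -
  have "odd A1 \<or> odd A2"
    using assms(2) by (metis coprime_common_divisor_nat numeral_eq_one_iff semiring_norm(85))
  then consider "u > 0" | "u < 0" "odd A1" | "u < 0" "odd A2"
    using assms(3) by linarith
  then show thesis
  proof cases
    case 1
    then show thesis by (intro that[of 1 "root A1 u"]) (use assms(1) in simp_all)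
  next
    case 2
    then show thesis
      by (intro that[of 1 "- root A1 (- u)"]) (use assms(1) in \<open>simp_all add: power_minus_odd\<close>)
  next
    case 3
    then show thesis by (intro that[of "-1" "root A1 (- u)"]) (use assms(1) in simp_all)
  qed
qed

lemma weakly_nondegenerate_iff_no_root:
  fixes \<phi> :: "real \<Rightarrow> real \<Rightarrow> real" and g :: "real \<Rightarrow> real"
  assumes "A1 > 0" and "coprime A1 A2" and "g 0 \<noteq> 0"
    and factor: "\<And>x y. x \<noteq> 0 \<Longrightarrow> y \<noteq> 0 \<Longrightarrow> \<phi> x y = x ^ m * y ^ n * g (y ^ A1 / x ^ A2)"
  shows "weakly_nondegenerate \<phi> \<longleftrightarrow> (\<forall>u. g u \<noteq> 0)"
proof
  assume "\<forall>u. g u \<noteq> 0"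
  then show "weakly_nondegenerate \<phi>"
    unfolding weakly_nondegenerate_def using factor by simp
next
  assume nondeg: "weakly_nondegenerate \<phi>"
  show "\<forall>u. g u \<noteq> 0"
  proof (intro allI notI)
    fix u assume root: "g u = 0"
    then have "u \<noteq> 0" using assms(3) by auto
    then obtain x y where "x \<noteq> 0" "y \<noteq> 0" "y ^ A1 / x ^ A2 = u"
      using power_quotient_surj assms(1,2) by blast
    then show False
      using nondeg root factor unfolding weakly_nondegenerate_def by fastforce
  qed
qed

lemma continuous_no_root_pos:
  fixes g :: "real \<Rightarrow> real"
  assumes "continuous_on UNIV g" and "g 0 > 0" and "\<forall>u. g u \<noteq> 0"
  shows "g u > 0"
proof (rule ccontr)
  assume "\<not> g u > 0"
  then have "g u \<le> 0" by simp
  have "continuous_on {min u 0..max u 0} g"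
    using assms(1) continuous_on_subset by blast
  then obtain v where "g v = 0"
    using IVT'[of g u 0 0] IVT2'[of g u 0 0] \<open>g u \<le> 0\<close> assms(2)
    by (cases "u \<le> 0") (auto simp: min_def max_def)
  with assms(3) show False by blast
qed

theorem mainTheorem2:
  fixes A1 A2 s B :: nat and a :: "nat \<Rightarrow> real" and \<alpha> \<beta> :: "nat \<Rightarrow> nat"
  assumes "A1 \<ge> 1" and "A2 \<ge> 1" and "coprime A1 A2"
    and "s \<ge> 2"
    and "\<forall>i\<in>{1..s}. a i \<noteq> 0"
    and "B \<ge> 1"
    and "\<forall>i\<in>{1..s}. A1 * \<alpha> i + A2 * \<beta> i = B"
    and "\<forall>i\<in>{1..s}. \<forall>j\<in>{1..s}. i < j \<longrightarrow> \<alpha> j < \<alpha> i"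
    and "a 1 > 0" and "a s > 0"
    and "even (\<alpha> 1)" and "even (\<beta> 1)" and "even (\<alpha> s)" and "even (\<beta> s)"
  shows "(weakly_nondegenerate (qh_poly s a \<alpha> \<beta>) \<longleftrightarrow> (\<forall>u::real. char_poly A2 s a \<alpha> u > 0))
       \<and> (weakly_nondegenerate (qh_poly s a \<alpha> \<beta>) \<longleftrightarrow> (\<forall>u::real. char_poly A2 s a \<alpha> u \<noteq> 0))"
proof -
  let ?g = "char_poly A2 s a \<alpha>"
  let ?k = "\<lambda>i. (\<alpha> 1 - \<alpha> i) div A2"
  have decreasing: "\<alpha> i < \<alpha> 1" if "i \<in> {2..s}" for i
    using assms(8) that by auto
  have shift: "\<alpha> 1 = \<alpha> i + A2 * ?k i \<and> \<beta> i = \<beta> 1 + A1 * ?k i" if i: "i \<in> {1..s}" for i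
  proof (rule weighted_exponent_shift)
    show "A1 * \<alpha> i + A2 * \<beta> i = A1 * \<alpha> 1 + A2 * \<beta> 1" using assms(4,7) i by auto
    show "\<alpha> i \<le> \<alpha> 1" using decreasing[of i] i by (cases "i = 1") auto
  qed (use assms(2,3) in auto)
  have g0: "?g 0 = a 1"
  proof (rule char_poly_at_0)
    show "\<alpha> 1 = \<alpha> i + A2 * ?k i" if "i \<in> {1..s}" for i
      using shift[OF that] by (rule conjunct1)
  qed (use assms(4) decreasing in auto)
  have factor: "qh_poly s a \<alpha> \<beta> x y = x ^ \<alpha> 1 * y ^ \<beta> 1 * ?g (y ^ A1 / x ^ A2)"
    if "x \<noteq> 0" "y \<noteq> 0" for x y :: real
    using assms(2) by (intro qh_poly_eq_char_poly[where k = ?k, OF _ shift that]) auto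
  have nondeg_iff: "weakly_nondegenerate (qh_poly s a \<alpha> \<beta>) \<longleftrightarrow> (\<forall>u. ?g u \<noteq> 0)"
    by (rule weakly_nondegenerate_iff_no_root[OF _ assms(3) _ factor]) (use g0 assms(1,9) in auto)
  have "continuous_on UNIV ?g"
    unfolding char_poly_def by (intro continuous_intros)
  then have "(\<forall>u. ?g u > 0) \<longleftrightarrow> (\<forall>u. ?g u \<noteq> 0)"
    using continuous_no_root_pos[of ?g] g0 assms(9) by (metis less_irrefl)
  with nondeg_iff show ?thesis by blast
qed

end
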